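(* Let $U$ be a $d\times d$ unitary matrix, $U_{ij}=\langle a_i|b_j\rangle$ for two orthonormal bases $\{|a_i\rangle\}$, $\{|b_j\rangle\}$ of $\mathbb{C}^d$, and let $p_i=\langle a_i|\rho|a_i\rangle$, $q_j=\langle b_j|\rho|b_j\rangle$ for a state $\rho$ on $\mathbb{C}^d$. For $k=1,\dots,d$ let $s_k=\max\{\|M\|: M \text{ a submatrix of } U \text{ with } \#\mathrm{cols}(M)+\#\mathrm{rows}(M)=k+1\}$, where $\|M\|$ is the largest singular value, and let $W=(s_1,s_2-s_1,\dots,s_d-s_{d-1})$. Then for every $\alpha\ge0$, $$T_\alpha(p)+T_\alpha(q)\ge T_\alpha(W).$$
   Context: The Tsallis (Havrda–Charvat) entropy of order $\alpha\neq1$ of a probability vector $x$ is $T_\alpha(x)=\frac{1}{1-\alpha}\left(\sum_i x_i^\alpha-1\right)$; for $\alpha=1$ it is understood as its limit, the Shannon entropy $-\sum_i x_i\ln x_i$. A submatrix is obtained by selecting a nonempty set of rows and a nonempty set of columns. *)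

theory Defs
  imports "HOL-Analysis.Analysis"
begin

definition braket :: "complex ^ 'n \<Rightarrow> complex ^ 'n \<Rightarrow> complex" where
  "braket x y = (\<Sum>k\<in>UNIV. cnj (x $ k) * y $ k)"

definition sandwich :: "complex ^ 'n \<Rightarrow> complex ^ 'n ^ 'n \<Rightarrow> complex" where
  "sandwich x \<rho> = (\<Sum>k\<in>UNIV. \<Sum>l\<in>UNIV. cnj (x $ k) * \<rho> $ k $ l * x $ l)"

definition orthonormal_basis_fam :: "('n::finite \<Rightarrow> complex ^ 'n) \<Rightarrow> bool" where
  "orthonormal_basis_fam a \<longleftrightarrow> (\<forall>i j. braket (a i) (a j) = (if i = j then 1 else 0))"

definition density_matrix :: "complex ^ 'n ^ 'n \<Rightarrow> bool" where
  "density_matrix \<rho> \<longleftrightarrow>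
     (\<forall>i j. \<rho> $ i $ j = cnj (\<rho> $ j $ i)) \<and>
     (\<forall>x. Im (sandwich x \<rho>) = 0 \<and> Re (sandwich x \<rho>) \<ge> 0) \<and>
     (\<Sum>i\<in>UNIV. \<rho> $ i $ i) = 1"

definition unitary_mat :: "complex ^ 'n ^ 'n \<Rightarrow> bool" where
  "unitary_mat U \<longleftrightarrow> (\<forall>i j. (\<Sum>k\<in>UNIV. cnj (U $ k $ i) * U $ k $ j) = (if i = j then 1 else 0))"

text \<open>Largest singular value (operator 2-norm) of the submatrix of U with row set R and
  column set C, realised as the operator norm of the map C^C -> C^R, x |-> U[R,C] x
  (zero-padded; padding does not change the norm).\<close>
definition submat_norm :: "complex ^ 'n ^ 'n \<Rightarrow> 'n set \<Rightarrow> 'n set \<Rightarrow> real" where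
  "submat_norm U R C = onorm (\<lambda>x::complex ^ 'n.
      (\<chi> i. if i \<in> R then (\<Sum>j\<in>C. U $ i $ j * x $ j) else 0))"

definition s_val :: "complex ^ 'n::finite ^ 'n \<Rightarrow> nat \<Rightarrow> real" where
  "s_val U k = Max {submat_norm U R C | R C. R \<noteq> {} \<and> C \<noteq> {} \<and> card R + card C = k + 1}"

definition W_vec :: "complex ^ 'n::finite ^ 'n \<Rightarrow> nat \<Rightarrow> real" where
  "W_vec U k = (if k = 1 then s_val U 1 else s_val U k - s_val U (k - 1))"

text \<open>Tsallis entropy over a finite index set I; order 1 is the Shannon entropy
  (with 0 ln 0 = 0). Note 0 powr a = 0 in Isabelle, i.e. sums run over the support.\<close>
definition tsallis :: "real \<Rightarrow> 'a set \<Rightarrow> ('a \<Rightarrow> real) \<Rightarrow> real" where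
  "tsallis \<alpha> I x = (if \<alpha> = 1 then - (\<Sum>i\<in>I. if x i = 0 then 0 else x i * ln (x i))
                    else ((\<Sum>i\<in>I. x i powr \<alpha>) - 1) / (1 - \<alpha>))"

end

theory Submission
  imports Defs
begin

text \<open>If \<open>P\<close> and \<open>Q\<close> project onto \<open>{a\<^sub>i | i \<in> R}\<close> and \<open>{b\<^sub>j | j \<in> C}\<close>, then
  \<open>P + Q \<le> 1 + \<parallel>U[R,C]\<parallel>\<close> as operators, since the cross term \<open>\<langle>Px|Qx\<rangle>\<close> only involves the
  submatrix \<open>U[R,C]\<close>. Taking the trace against \<open>\<rho>\<close>, any \<open>k + 1\<close> entries of the combined
  vector \<open>(p, q)\<close> sum to at most \<open>1 + s\<^sub>k\<close>, so \<open>(p, q)\<close> is majorized by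
  \<open>(1, W\<^sub>1, \<dots>, W\<^sub>d)\<close>, whose partial sums are exactly \<open>1 + s\<^sub>k\<close> and whose total is
  \<open>1 + s\<^sub>d = 2\<close>. As \<open>t \<mapsto> (t\<^sup>\<alpha> - t) / (1 - \<alpha>)\<close> is concave and vanishes at \<open>0\<close> and \<open>1\<close>,
  Karamata's inequality turns the majorization into the entropy bound.\<close>

section \<open>Concavity of the Tsallis term\<close>

lemma Bernoulli_inequality_powr:
  fixes t p :: real assumes "t > 0" "p \<ge> 1"
  shows "1 + p * (t - 1) \<le> t powr p"
proof -
  have d: "((\<lambda>x. x powr p) has_real_derivative p * 1 powr (p - 1)) (at 1 within {0<..})"
    by (auto intro!: derivative_eq_intros)
  have "p * 1 powr (p - 1) * (t - 1) \<le> t powr p - 1 powr p"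
    by (rule convex_on_imp_above_tangent[OF powr_convex[OF assms(2)] _ _ _ d])
       (use assms in \<open>auto simp: interior_open convex_connected\<close>)
  then show ?thesis by simp
qed

lemma Bernoulli_inequality_powr_le_1:
  fixes t p :: real assumes "t > 0" "0 \<le> p" "p \<le> 1"
  shows "t powr p \<le> 1 + p * (t - 1)"
proof (cases "p = 0")
  case True then show ?thesis using assms by simp
next
  case False
  then have p: "p > 0" using assms by simp
  have "1 + (1/p) * (t powr p - 1) \<le> (t powr p) powr (1/p)"
    by (rule Bernoulli_inequality_powr) (use assms p in auto)
  also have "(t powr p) powr (1/p) = t" using p assms by (simp add: powr_powr)
  finally show ?thesis using p by (simp add: field_simps)
qed

text \<open>The sign of \<open>1 - a\<close> decides on which side of its tangent at \<open>x\<close> the power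
  \<open>y powr a\<close> lies.\<close>
lemma powr_tangent_mult_sign_le:
  fixes a x y :: real assumes a: "a \<ge> 0" and x: "x > 0" and y: "y \<ge> 0"
  shows "(1 - a) * y powr a \<le> (1 - a) * (x powr a + a * x powr (a - 1) * (y - x))"
proof (cases "y = 0")
  case True
  have "x powr (a - 1) * x = x powr a" using x by (simp add: powr_diff)
  then have "x powr a + a * x powr (a - 1) * (0 - x) = (1 - a) * x powr a"
    by (simp add: algebra_simps)
  then show ?thesis
    using True mult_nonneg_nonneg[of "(1 - a) * (1 - a)" "x powr a"] by (simp add: mult.assoc)
next
  case False
  define t where "t = y / x"
  have t: "t > 0" using x y False by (simp add: t_def)
  have "(1 - a) * t powr a \<le> (1 - a) * (1 + a * (t - 1))"
  proof (cases "a \<le> 1")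
    case True
    then show ?thesis using Bernoulli_inequality_powr_le_1[OF t a True] by (simp add: mult_left_mono)
  next
    case False
    then show ?thesis using Bernoulli_inequality_powr[OF t, of a] by (simp add: mult_left_mono_neg)
  qed
  then have "x powr a * ((1 - a) * t powr a) \<le> x powr a * ((1 - a) * (1 + a * (t - 1)))"
    by (rule mult_left_mono) simp
  moreover have "y powr a = x powr a * t powr a" using x t by (simp add: t_def powr_divide)
  moreover have "x powr a + a * x powr (a - 1) * (y - x) = x powr a * (1 + a * (t - 1))"
    using x by (simp add: t_def powr_diff field_simps)
  ultimately show ?thesis by (metis mult.left_commute)
qed

definition tsallis_term :: "real \<Rightarrow> real \<Rightarrow> real" where
  "tsallis_term a t =
     (if a = 1 then (if t = 0 then 0 else - t * ln t) else (t powr a - t) / (1 - a))"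

text \<open>The derivative of \<open>tsallis_term a\<close> on the positive reals.\<close>
definition tsallis_slope :: "real \<Rightarrow> real \<Rightarrow> real" where
  "tsallis_slope a t = (if a = 1 then - ln t - 1 else (a * t powr (a - 1) - 1) / (1 - a))"

lemma tsallis_term_0 [simp]: "tsallis_term a 0 = 0"
  and tsallis_term_1 [simp]: "tsallis_term a 1 = 0"
  by (simp_all add: tsallis_term_def)

lemma tsallis_term_le_tangent:
  fixes a x y :: real assumes a: "a \<ge> 0" and x: "x > 0" and y: "y \<ge> 0"
  shows "tsallis_term a y \<le> tsallis_term a x + tsallis_slope a x * (y - x)"
proof (cases "a = 1")
  case True
  show ?thesis
  proof (cases "y = 0")
    case True
    then show ?thesis using \<open>a = 1\<close> x by (simp add: tsallis_term_def tsallis_slope_def algebra_simps)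
  next
    case False
    then have y: "y > 0" using y by simp
    have "y * ln (x / y) \<le> y * (x / y - 1)"
      using x y by (intro mult_left_mono ln_le_minus_one) auto
    moreover have "y * (x / y - 1) = x - y" using y by (simp add: field_simps)
    ultimately have "y * ln x - y * ln y \<le> x - y"
      using x y by (simp add: ln_div right_diff_distrib)
    then show ?thesis using \<open>a = 1\<close> False x
      by (simp add: tsallis_term_def tsallis_slope_def algebra_simps)
  qed
next
  case False
  then have ne: "1 - a \<noteq> 0" by simp
  define T where "T = x powr a + a * x powr (a - 1) * (y - x)"
  have "(1 - a) * (y powr a - T) \<le> 0"
    using powr_tangent_mult_sign_le[OF a x y] by (simp add: T_def algebra_simps)
  then have "(1 - a) * (y powr a - T) / (1 - a)\<^sup>2 \<le> 0"
    by (rule divide_nonpos_nonneg) simp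
  also have "(1 - a) * (y powr a - T) / (1 - a)\<^sup>2 = (y powr a - T) / (1 - a)"
    using ne by (simp add: power2_eq_square)
  also have "\<dots> = ((y powr a - y) - (x powr a - x) - (a * x powr (a - 1) - 1) * (y - x)) / (1 - a)"
    by (rule arg_cong[where f="\<lambda>z. z / (1 - a)"]) (simp add: T_def algebra_simps)
  also have "\<dots> = tsallis_term a y - (tsallis_term a x + tsallis_slope a x * (y - x))"
    using False by (simp add: tsallis_term_def tsallis_slope_def diff_divide_distrib
        flip: times_divide_eq_left)
  finally show ?thesis by simp
qed

lemma tsallis_slope_antimono:
  fixes a x x' :: real assumes a: "a \<ge> 0" and x: "x > 0" and xx: "x \<le> x'"
  shows "tsallis_slope a x' \<le> tsallis_slope a x"
proof (cases "a < 1")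
  case True
  have "a * x' powr (a - 1) \<le> a * x powr (a - 1)"
    using a x xx True by (intro mult_left_mono powr_mono2') auto
  then show ?thesis using True x xx by (auto simp: tsallis_slope_def divide_right_mono)
next
  case False
  have "a * x powr (a - 1) \<le> a * x' powr (a - 1)"
    using a x xx False by (intro mult_left_mono powr_mono2) auto
  then show ?thesis using False x xx by (auto simp: tsallis_slope_def divide_right_mono_neg)
qed

section \<open>Karamata's inequality\<close>

lemma abel_summation_le:
  fixes G d :: "nat \<Rightarrow> real"
  assumes "\<And>k. k \<le> m \<Longrightarrow> 0 \<le> (\<Sum>i<k. d i)"
    and "\<And>i j. i \<le> j \<Longrightarrow> j < m \<Longrightarrow> G i \<le> G j"
  shows "(\<Sum>i<m. G i * d i) \<le> G (m - 1) * (\<Sum>i<m. d i)"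
  using assms
proof (induction m)
  case 0 then show ?case by simp
next
  case (Suc m)
  have IH: "(\<Sum>i<m. G i * d i) \<le> G (m - 1) * (\<Sum>i<m. d i)"
    using Suc.prems by (intro Suc.IH) auto
  show ?case
  proof (cases "m = 0")
    case True then show ?thesis by simp
  next
    case False
    have "G (m - 1) * (\<Sum>i<m. d i) \<le> G m * (\<Sum>i<m. d i)"
      using Suc.prems(1)[of m] Suc.prems(2)[of "m - 1" m] False by (intro mult_right_mono) auto
    with IH show ?thesis by (simp add: algebra_simps)
  qed
qed

text \<open>Karamata's inequality for a concave \<open>f\<close>, given through a supergradient \<open>g\<close>,
  when only the majorized sequence \<open>x\<close> is sorted. Summing the tangent inequalities at the
  positive \<open>x i\<close> reduces the claim, by Abel summation, to the partial sums of \<open>y - x\<close>.\<close>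
lemma sum_concave_le_of_majorized:
  fixes f g :: "real \<Rightarrow> real" and x y :: "nat \<Rightarrow> real"
  assumes tangent: "\<And>u v. u > 0 \<Longrightarrow> v \<ge> 0 \<Longrightarrow> f v \<le> f u + g u * (v - u)"
    and slope: "\<And>u v. u > 0 \<Longrightarrow> u \<le> v \<Longrightarrow> g v \<le> g u"
    and dec: "\<And>i j. i \<le> j \<Longrightarrow> j < n \<Longrightarrow> x j \<le> x i"
    and x0: "\<And>i. i < n \<Longrightarrow> 0 \<le> x i" and y0: "\<And>i. i < n \<Longrightarrow> 0 \<le> y i"
    and part: "\<And>k. k \<le> n \<Longrightarrow> (\<Sum>i<k. x i) \<le> (\<Sum>i<k. y i)"
    and tot: "(\<Sum>i<n. x i) = (\<Sum>i<n. y i)"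
  shows "(\<Sum>i<n. f (y i)) \<le> (\<Sum>i<n. f (x i))"
proof -
  define m where "m = (LEAST i. i = n \<or> x i = 0)"
  have mn: "m \<le> n" unfolding m_def by (rule Least_le) simp
  have xpos: "x i > 0" if "i < m" for i
  proof -
    have "\<not> (i = n \<or> x i = 0)" using not_less_Least[of i "\<lambda>i. i = n \<or> x i = 0"] that
      unfolding m_def by blast
    then show ?thesis using x0[of i] that mn by auto
  qed
  have xz: "x i = 0" if "m \<le> i" "i < n" for i
  proof -
    have "m = n \<or> x m = 0" unfolding m_def by (rule LeastI[of _ n]) simp
    then show ?thesis using dec[of m i] that x0[of i] by auto
  qed
  have split: "(\<Sum>i<n. h i) = (\<Sum>i<m. h i) + (\<Sum>i\<in>{m..<n}. h i)" for h :: "nat \<Rightarrow> real"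
    using mn by (metis lessThan_atLeast0 sum.atLeastLessThan_concat zero_le)
  have xtail: "(\<Sum>i\<in>{m..<n}. x i) = 0" using xz by simp
  have "(\<Sum>i<m. y i) \<le> (\<Sum>i<n. y i)"
    using split[of y] y0 by (auto intro!: sum_nonneg)
  then have xy_m: "(\<Sum>i<m. x i) = (\<Sum>i<m. y i)"
    using part[OF mn] split[of x] xtail tot by linarith
  have "(\<Sum>i\<in>{m..<n}. y i) = 0" using split[of x] split[of y] xtail tot xy_m by linarith
  then have yz: "y i = 0" if "m \<le> i" "i < n" for i
    using sum_nonneg_eq_0_iff[of "{m..<n}" y] y0 that by auto
  have "(\<Sum>i<n. f (y i)) - (\<Sum>i<n. f (x i)) = (\<Sum>i<m. f (y i) - f (x i))"
    using split[of "\<lambda>i. f (y i)"] split[of "\<lambda>i. f (x i)"] xz yz by (simp add: sum_subtractf)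
  also have "\<dots> \<le> (\<Sum>i<m. g (x i) * (y i - x i))"
    by (intro sum_mono) (use tangent xpos y0 mn in \<open>auto simp: algebra_simps\<close>)
  also have "\<dots> \<le> g (x (m - 1)) * (\<Sum>i<m. y i - x i)"
  proof (rule abel_summation_le)
    show "0 \<le> (\<Sum>i<k. y i - x i)" if "k \<le> m" for k
      using part[of k] that mn by (simp add: sum_subtractf)
    show "g (x i) \<le> g (x j)" if "i \<le> j" "j < m" for i j
      by (rule slope[OF xpos]) (use that dec mn in auto)
  qed
  also have "\<dots> = 0" using xy_m by (simp add: sum_subtractf)
  finally show ?thesis by simp
qed

lemma sum_concave_le_of_subset_majorized:
  fixes f g :: "real \<Rightarrow> real" and x :: "'a \<Rightarrow> real" and y :: "nat \<Rightarrow> real"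
  assumes tangent: "\<And>u v. u > 0 \<Longrightarrow> v \<ge> 0 \<Longrightarrow> f v \<le> f u + g u * (v - u)"
    and slope: "\<And>u v. u > 0 \<Longrightarrow> u \<le> v \<Longrightarrow> g v \<le> g u"
    and I: "finite I"
    and x0: "\<And>i. i \<in> I \<Longrightarrow> 0 \<le> x i" and y0: "\<And>k. k < card I \<Longrightarrow> 0 \<le> y k"
    and part: "\<And>S. S \<subseteq> I \<Longrightarrow> (\<Sum>i\<in>S. x i) \<le> (\<Sum>k<card S. y k)"
    and tot: "(\<Sum>i\<in>I. x i) = (\<Sum>k<card I. y k)"
  shows "(\<Sum>k<card I. f (y k)) \<le> (\<Sum>i\<in>I. f (x i))"
proof -
  obtain xs where xs: "distinct xs" "set xs = I" using finite_distinct_list[OF I] by blast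
  define L where "L = sort_key (\<lambda>i. - x i) xs"
  have L: "distinct L" "set L = I" "length L = card I"
    using xs by (simp_all add: L_def distinct_card[symmetric])
  have bij: "bij_betw ((!) L) {..<card I} I" using L by (intro bij_betw_nth) auto
  have reindex: "(\<Sum>k<card I. h (L ! k)) = (\<Sum>i\<in>I. h i)" for h :: "'a \<Rightarrow> real"
    by (rule sum.reindex_bij_betw[OF bij])
  have sorted: "sorted (map (\<lambda>i. - x i) L)" unfolding L_def by (rule sorted_sort_key)
  have "(\<Sum>k<card I. f (y k)) \<le> (\<Sum>k<card I. f (x (L ! k)))"
  proof (rule sum_concave_le_of_majorized[OF tangent slope])
    show "x (L ! j) \<le> x (L ! i)" if "i \<le> j" "j < card I" for i j
      using sorted_nth_mono[OF sorted that(1)] that L by simp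
    show "0 \<le> x (L ! k)" if "k < card I" for k
      using x0 bij_betwE[OF bij] that by blast
    show "(\<Sum>i<k. x (L ! i)) \<le> (\<Sum>i<k. y i)" if "k \<le> card I" for k
    proof -
      have inj: "inj_on ((!) L) {..<k}"
        using bij_betw_imp_inj_on[OF bij] that by (auto intro: inj_on_subset)
      have "(\<Sum>i<k. x (L ! i)) = (\<Sum>i\<in>(!) L ` {..<k}. x i)" by (simp add: sum.reindex[OF inj])
      also have "\<dots> \<le> (\<Sum>i<card ((!) L ` {..<k}). y i)"
        using bij_betwE[OF bij] that by (intro part) auto
      finally show ?thesis using card_image[OF inj] by simp
    qed
    show "(\<Sum>k<card I. x (L ! k)) = (\<Sum>k<card I. y k)" using tot reindex by simp
  qed (use y0 in auto)
  then show ?thesis using reindex[of "\<lambda>i. f (x i)"] by simp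
qed

section \<open>Overlaps of a pure state with two bases\<close>

lemma mult_cnj_eq_cmod_sq: "z * cnj z = (complex_of_real (cmod z))\<^sup>2"
  and cnj_mult_eq_cmod_sq: "cnj z * z = (complex_of_real (cmod z))\<^sup>2"
  by (metis complex_norm_square of_real_power mult.commute)+

lemma norm_vec_sq: "(norm (x :: complex ^ 'n))\<^sup>2 = (\<Sum>k\<in>UNIV. (cmod (x $ k))\<^sup>2)"
  unfolding norm_vec_def L2_set_def by (simp add: sum_nonneg)

lemma norm_vec_le_if_cmod_le:
  fixes x y :: "complex ^ 'n" assumes "\<And>i. cmod (x $ i) \<le> cmod (y $ i)"
  shows "norm x \<le> norm y"
  unfolding norm_vec_def by (rule L2_set_mono) (use assms in auto)

lemma norm_restrict_vec_sq:
  fixes f :: "'n::finite \<Rightarrow> complex"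
  shows "(norm (\<chi> i. if i \<in> R then f i else 0))\<^sup>2 = (\<Sum>i\<in>R. (cmod (f i))\<^sup>2)"
proof -
  have sq: "(cmod ((\<chi> i. if i \<in> R then f i else 0) $ k))\<^sup>2 = (if k \<in> R then (cmod (f k))\<^sup>2 else 0)"
    for k by simp
  show ?thesis unfolding norm_vec_sq sq sum.inter_restrict[OF finite, symmetric] by simp
qed

lemma norm_restrict_vec_le: "norm (\<chi> j. if j \<in> C then x $ j else 0) \<le> norm (x :: complex ^ 'n)"
  by (rule norm_vec_le_if_cmod_le) simp

lemma braket_self: "braket x x = of_real ((norm x)\<^sup>2)"
  unfolding braket_def norm_vec_sq of_real_sum
  by (intro sum.cong) (auto simp: mult_cnj_eq_cmod_sq cnj_mult_eq_cmod_sq)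

lemma cmod_braket_le: "cmod (braket x y) \<le> norm x * norm y"
proof -
  have "cmod (braket x y) \<le> (\<Sum>k\<in>UNIV. \<bar>cmod (x $ k)\<bar> * \<bar>cmod (y $ k)\<bar>)"
    unfolding braket_def by (rule order_trans[OF norm_sum]) (simp add: norm_mult)
  also have "\<dots> \<le> L2_set (\<lambda>k. cmod (x $ k)) UNIV * L2_set (\<lambda>k. cmod (y $ k)) UNIV"
    by (rule L2_set_mult_ineq)
  finally show ?thesis by (simp add: norm_vec_def)
qed

lemma braket_add_left: "braket (x + y) z = braket x z + braket y z"
  and braket_add_right: "braket z (x + y) = braket z x + braket z y"
  and braket_scale_left: "braket (c *s x) z = cnj c * braket x z"
  and braket_scale_right: "braket z (c *s x) = c * braket z x"
  and braket_commute: "braket y x = cnj (braket x y)"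
  unfolding braket_def
  by (simp_all add: sum.distrib ring_distribs sum_distrib_left mult_ac)

lemma braket_sum_left: "finite S \<Longrightarrow> braket (\<Sum>i\<in>S. f i) z = (\<Sum>i\<in>S. braket (f i) z)"
  by (induction S rule: finite_induct) (auto simp: braket_add_left, simp add: braket_def)

lemma braket_sum_right: "finite S \<Longrightarrow> braket z (\<Sum>i\<in>S. f i) = (\<Sum>i\<in>S. braket z (f i))"
  by (induction S rule: finite_induct) (auto simp: braket_add_right, simp add: braket_def)

lemma braket_expansion_left:
  fixes a :: "'n::finite \<Rightarrow> complex ^ 'n"
  shows "braket (\<Sum>i\<in>R. braket (a i) x *s a i) x = of_real (\<Sum>i\<in>R. (cmod (braket (a i) x))\<^sup>2)"
  unfolding braket_sum_left[OF finite] braket_scale_left of_real_sum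
  by (intro sum.cong) (auto simp: cnj_mult_eq_cmod_sq)

lemma braket_orthonormal_combinations:
  assumes "orthonormal_basis_fam a"
  shows "braket (\<Sum>i\<in>R. f i *s a i) (\<Sum>i\<in>R. g i *s a i) = (\<Sum>i\<in>R. cnj (f i) * g i)"
proof -
  have "braket (\<Sum>i\<in>R. f i *s a i) (\<Sum>i\<in>R. g i *s a i)
      = (\<Sum>j\<in>R. g j * (\<Sum>i\<in>R. cnj (f i) * (if i = j then 1 else 0)))"
    using assms unfolding orthonormal_basis_fam_def braket_sum_left[OF finite]
      braket_sum_right[OF finite] braket_scale_left braket_scale_right by simp
  also have "\<dots> = (\<Sum>i\<in>R. cnj (f i) * g i)"
    by (simp add: if_distrib mult.commute cong: if_cong)
  finally show ?thesis .
qed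

definition submat_op :: "complex ^ 'n ^ 'n \<Rightarrow> 'n set \<Rightarrow> 'n set \<Rightarrow> complex ^ 'n \<Rightarrow> complex ^ 'n"
  where "submat_op U R C x = (\<chi> i. if i \<in> R then (\<Sum>j\<in>C. U $ i $ j * x $ j) else 0)"

lemma submat_norm_eq_onorm: "submat_norm U R C = onorm (submat_op U R C)"
  unfolding submat_norm_def by (simp add: submat_op_def[abs_def])

lemma bounded_linear_submat_op: "bounded_linear (submat_op U R C)"
proof -
  have "linear (submat_op U R C)"
    by (rule linearI) (auto simp: submat_op_def vec_eq_iff sum.distrib ring_distribs
        scaleR_sum_right mult_scaleR_right)
  then show ?thesis by (simp add: linear_conv_bounded_linear)
qed

lemma submat_norm_nonneg: "0 \<le> submat_norm U R C"
  unfolding submat_norm_eq_onorm by (rule onorm_pos_le[OF bounded_linear_submat_op])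

lemma norm_submat_op_le: "norm (submat_op U R C x) \<le> submat_norm U R C * norm x"
  unfolding submat_norm_eq_onorm by (rule onorm[OF bounded_linear_submat_op])

lemma braket_combinations_eq_submat_op:
  assumes "\<And>i j. U $ i $ j = braket (a i) (b j)"
  shows "braket (\<Sum>i\<in>R. f i *s a i) (\<Sum>j\<in>C. g j *s b j)
       = braket (\<chi> i. if i \<in> R then f i else 0) (submat_op U R C (\<chi> j. if j \<in> C then g j else 0))"
proof -
  have "braket (\<Sum>i\<in>R. f i *s a i) (\<Sum>j\<in>C. g j *s b j)
      = (\<Sum>j\<in>C. g j * (\<Sum>i\<in>R. cnj (f i) * U $ i $ j))"
    unfolding assms braket_sum_left[OF finite] braket_sum_right[OF finite] braket_scale_left
      braket_scale_right ..
  also have "\<dots> = (\<Sum>i\<in>R. cnj (f i) * (\<Sum>j\<in>C. U $ i $ j * g j))"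
    unfolding sum_distrib_left by (subst sum.swap) (simp add: mult_ac)
  finally show ?thesis
    unfolding braket_def submat_op_def by (simp add: if_distrib sum.If_cases cong: if_cong)
qed

lemma cmod_braket_combinations_le:
  assumes "\<And>i j. U $ i $ j = braket (a i) (b j)"
  shows "cmod (braket (\<Sum>i\<in>R. f i *s a i) (\<Sum>j\<in>C. g j *s b j))
      \<le> submat_norm U R C * (sqrt (\<Sum>i\<in>R. (cmod (f i))\<^sup>2) * sqrt (\<Sum>j\<in>C. (cmod (g j))\<^sup>2))"
proof -
  let ?f = "\<chi> i. if i \<in> R then f i else 0"
  let ?g = "\<chi> j. if j \<in> C then g j else 0"
  have "cmod (braket (\<Sum>i\<in>R. f i *s a i) (\<Sum>j\<in>C. g j *s b j))
      \<le> norm ?f * norm (submat_op U R C ?g)"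
    unfolding braket_combinations_eq_submat_op[OF assms] by (rule cmod_braket_le)
  also have "\<dots> \<le> norm ?f * (submat_norm U R C * norm ?g)"
    by (intro mult_left_mono norm_submat_op_le) simp
  also have "norm ?f = sqrt (\<Sum>i\<in>R. (cmod (f i))\<^sup>2)"
    unfolding norm_restrict_vec_sq[symmetric] by simp
  also have "norm ?g = sqrt (\<Sum>j\<in>C. (cmod (g j))\<^sup>2)"
    unfolding norm_restrict_vec_sq[symmetric] by simp
  finally show ?thesis by (simp add: algebra_simps)
qed

text \<open>For a pure state \<open>x\<close>, with \<open>u\<close> and \<open>v\<close> its projections onto the spans of
  \<open>a\<close> on \<open>R\<close> and of \<open>b\<close> on \<open>C\<close>, we have \<open>\<langle>u + v|x\<rangle> = A + B\<close>, while
  \<open>\<parallel>u + v\<parallel>\<^sup>2 \<le> (1 + c) (A + B)\<close> because the cross term \<open>\<langle>u|v\<rangle>\<close> only sees the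
  submatrix; Cauchy-Schwarz combines the two.\<close>
lemma overlap_sum_le_submat_norm:
  fixes a b :: "'n::finite \<Rightarrow> complex ^ 'n" and U :: "complex ^ 'n ^ 'n"
  assumes oa: "orthonormal_basis_fam a" and ob: "orthonormal_basis_fam b"
    and U: "\<And>i j. U $ i $ j = braket (a i) (b j)"
  shows "(\<Sum>i\<in>R. (cmod (braket (a i) x))\<^sup>2) + (\<Sum>j\<in>C. (cmod (braket (b j) x))\<^sup>2)
          \<le> (1 + submat_norm U R C) * (norm x)\<^sup>2"
proof -
  define A where "A = (\<Sum>i\<in>R. (cmod (braket (a i) x))\<^sup>2)"
  define B where "B = (\<Sum>j\<in>C. (cmod (braket (b j) x))\<^sup>2)"
  define c where "c = submat_norm U R C"
  define u where "u = (\<Sum>i\<in>R. braket (a i) x *s a i)"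
  define v where "v = (\<Sum>j\<in>C. braket (b j) x *s b j)"
  have A: "0 \<le> A" and B: "0 \<le> B" and c: "0 \<le> c"
    by (simp_all add: A_def B_def c_def sum_nonneg submat_norm_nonneg)
  have braket_uu: "braket u u = of_real A" and braket_vv: "braket v v = of_real B"
    unfolding u_def v_def A_def B_def braket_orthonormal_combinations[OF oa]
      braket_orthonormal_combinations[OF ob] of_real_sum
    by (auto intro!: sum.cong simp: cnj_mult_eq_cmod_sq)
  have uv: "cmod (braket u v) \<le> c * (sqrt A * sqrt B)"
    unfolding u_def v_def A_def B_def c_def by (rule cmod_braket_combinations_le[OF U])
  have "(norm (u + v))\<^sup>2 = Re (braket (u + v) (u + v))" by (simp add: braket_self)
  also have "\<dots> = A + B + 2 * Re (braket u v)"
    by (simp add: braket_add_left braket_add_right braket_uu braket_vv braket_commute[of v u])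
  also have "\<dots> \<le> A + B + c * (2 * (sqrt A * sqrt B))"
    using uv complex_Re_le_cmod[of "braket u v"] by linarith
  also have "\<dots> \<le> A + B + c * (A + B)"
    using sum_squares_bound[of "sqrt A" "sqrt B"] A B c
    by (intro add_left_mono mult_left_mono) (simp_all add: power2_eq_square)
  finally have norm_uv: "(norm (u + v))\<^sup>2 \<le> (1 + c) * (A + B)" by (simp add: algebra_simps)
  have "A + B = Re (braket (u + v) x)"
    unfolding u_def v_def A_def B_def braket_add_left braket_expansion_left by simp
  also have "\<dots> \<le> norm (u + v) * norm x"
    using cmod_braket_le[of "u + v" x] complex_Re_le_cmod by (meson order_trans)
  finally have "(A + B)\<^sup>2 \<le> (norm (u + v))\<^sup>2 * (norm x)\<^sup>2"
    using A B by (metis power_mono power_mult_distrib add_nonneg_nonneg)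
  also have "\<dots> \<le> ((1 + c) * (A + B)) * (norm x)\<^sup>2"
    by (rule mult_right_mono[OF norm_uv]) simp
  also have "\<dots> = ((1 + c) * (norm x)\<^sup>2) * (A + B)" by simp
  finally have "A + B \<le> (1 + c) * (norm x)\<^sup>2"
    using A B c by (cases "A + B = 0") (auto simp: power2_eq_square mult_le_cancel_right)
  then show ?thesis unfolding A_def B_def c_def .
qed

section \<open>Mixed states\<close>

definition sesq :: "complex ^ 'n \<Rightarrow> complex ^ 'n ^ 'n \<Rightarrow> complex ^ 'n \<Rightarrow> complex" where
  "sesq x M y = (\<Sum>k\<in>UNIV. \<Sum>l\<in>UNIV. cnj (x $ k) * M $ k $ l * y $ l)"

definition hermitian_mat :: "complex ^ 'n ^ 'n \<Rightarrow> bool" where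
  "hermitian_mat \<rho> \<longleftrightarrow> (\<forall>i j. \<rho> $ i $ j = cnj (\<rho> $ j $ i))"

definition psd_mat :: "complex ^ 'n ^ 'n \<Rightarrow> bool" where
  "psd_mat \<rho> \<longleftrightarrow> (\<forall>x. 0 \<le> Re (sandwich x \<rho>))"

definition trace_prod :: "complex ^ 'n ^ 'n \<Rightarrow> complex ^ 'n ^ 'n \<Rightarrow> complex" where
  "trace_prod \<rho> M = (\<Sum>k\<in>UNIV. \<Sum>l\<in>UNIV. \<rho> $ k $ l * M $ l $ k)"

lemma sandwich_eq_sesq: "sandwich x M = sesq x M x"
  unfolding sandwich_def sesq_def ..

lemma sesq_add_left: "sesq (x + y) M z = sesq x M z + sesq y M z"
  and sesq_add_right: "sesq z M (x + y) = sesq z M x + sesq z M y"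
  and sesq_scale_left: "sesq (c *s x) M z = cnj c * sesq x M z"
  and sesq_scale_right: "sesq z M (c *s x) = c * sesq z M x"
  unfolding sesq_def by (simp_all add: sum.distrib ring_distribs sum_distrib_left mult_ac)

lemma if_one_zero_mult: "(if P then 1 else 0) * z = (if P then z else (0::complex))"
  and mult_if_one_zero: "z * (if P then 1 else 0) = (if P then z else (0::complex))"
  and cnj_if_one_zero: "cnj (if P then 1 else 0) = (if P then 1 else (0::complex))"
  by simp_all

lemma sesq_axis_left: "sesq (axis k 1) M x = (\<Sum>l\<in>UNIV. M $ k $ l * x $ l)"
  unfolding sesq_def axis_def
  by (subst sum.swap) (simp add: if_one_zero_mult cnj_if_one_zero if_distrib[of "\<lambda>z. z * _"]
      sum.delta' cong: if_cong)

lemma sesq_axis_right: "sesq x M (axis k 1) = (\<Sum>l\<in>UNIV. cnj (x $ l) * M $ l $ k)"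
  unfolding sesq_def axis_def by (simp add: mult_if_one_zero sum.delta')

lemma sesq_axis: "sesq (axis k 1) M (axis l 1) = M $ k $ l"
  unfolding sesq_axis_left by (simp add: axis_def mult_if_one_zero)

lemma hermitian_mat_cnj: "hermitian_mat \<rho> \<Longrightarrow> cnj (\<rho> $ i $ j) = \<rho> $ j $ i"
  unfolding hermitian_mat_def by (metis complex_cnj_cnj)

lemma sesq_swap_hermitian:
  assumes "hermitian_mat \<rho>" shows "sesq y \<rho> x = cnj (sesq x \<rho> y)"
proof -
  have "cnj (sesq x \<rho> y) = (\<Sum>k\<in>UNIV. \<Sum>l\<in>UNIV. cnj (y $ l) * \<rho> $ l $ k * x $ k)"
    unfolding sesq_def by (simp add: hermitian_mat_cnj[OF assms] mult_ac)
  also have "\<dots> = sesq y \<rho> x" unfolding sesq_def by (rule sum.swap)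
  finally show ?thesis by simp
qed

lemma hermitian_psd_diag:
  assumes "hermitian_mat \<rho>" "psd_mat \<rho>"
  shows "\<rho> $ k $ k = of_real (Re (\<rho> $ k $ k))" "0 \<le> Re (\<rho> $ k $ k)"
proof -
  have "\<rho> $ k $ k = cnj (\<rho> $ k $ k)" using assms(1) unfolding hermitian_mat_def by blast
  then have "Im (\<rho> $ k $ k) = 0" by (metis Reals_cnj_iff complex_is_Real_iff)
  then show "\<rho> $ k $ k = of_real (Re (\<rho> $ k $ k))" by (simp add: complex_eq_iff)
  show "0 \<le> Re (\<rho> $ k $ k)"
    using assms(2) unfolding psd_mat_def by (metis sandwich_eq_sesq sesq_axis)
qed

lemma hermitian_psd_row_zero:
  assumes h: "hermitian_mat \<rho>" and p: "psd_mat \<rho>" and z: "\<rho> $ k $ k = 0"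
  shows "\<rho> $ k $ l = 0"
proof (rule ccontr)
  assume nz: "\<rho> $ k $ l \<noteq> 0"
  define r where "r = \<rho> $ k $ l"
  define s :: real where "s = (Re (\<rho> $ l $ l) + 1) / (2 * (cmod r)\<^sup>2)"
  define t where "t = - (of_real s * r)"
  have "sandwich (t *s axis k 1 + axis l 1) \<rho>
      = cnj t * t * \<rho> $ k $ k + cnj t * \<rho> $ k $ l + t * \<rho> $ l $ k + \<rho> $ l $ l"
    unfolding sandwich_eq_sesq
    by (simp add: sesq_add_left sesq_add_right sesq_scale_left sesq_scale_right sesq_axis algebra_simps)
  also have "\<dots> = - (of_real s * (cnj r * r)) - (of_real s * (cnj r * r)) + \<rho> $ l $ l"
    using z hermitian_mat_cnj[OF h, of k l] by (simp add: t_def r_def algebra_simps)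
  finally have "Re (sandwich (t *s axis k 1 + axis l 1) \<rho>) = - 2 * s * (cmod r)\<^sup>2 + Re (\<rho> $ l $ l)"
    by (simp add: cnj_mult_eq_cmod_sq)
  also have "\<dots> = -1" using nz by (simp add: s_def r_def field_simps)
  finally show False using p unfolding psd_mat_def by (metis neg_0_le_iff_le not_one_le_zero)
qed

text \<open>One step of a Cholesky decomposition: subtracting the rank-one matrix built from the
  \<open>k\<close>-th column leaves the Schur complement \<open>\<rho>'\<close>, which is again positive semidefinite
  since \<open>\<langle>x|\<rho>'|x\<rangle> = \<langle>x + t e\<^sub>k|\<rho>|x + t e\<^sub>k\<rangle>\<close> for a suitable \<open>t\<close>.\<close>
lemma hermitian_psd_schur_complement:
  assumes h: "hermitian_mat \<rho>" and p: "psd_mat \<rho>" and kk: "\<rho> $ k $ k \<noteq> 0"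
  defines "\<rho>' \<equiv> \<chi> i j. \<rho> $ i $ j - \<rho> $ i $ k * \<rho> $ k $ j / \<rho> $ k $ k"
  shows "hermitian_mat \<rho>'" and "psd_mat \<rho>'"
    and "\<exists>w. \<forall>i j. \<rho> $ i $ j = \<rho>' $ i $ j + w $ i * cnj (w $ j)"
proof -
  define r where "r = Re (\<rho> $ k $ k)"
  have rk: "\<rho> $ k $ k = of_real r" using hermitian_psd_diag(1)[OF h p] r_def by blast
  have "r \<noteq> 0" using kk rk by auto
  then have r: "r > 0" using hermitian_psd_diag(2)[OF h p, of k] r_def by simp
  show "hermitian_mat \<rho>'"
    unfolding hermitian_mat_def \<rho>'_def using rk by (simp add: hermitian_mat_cnj[OF h])
  show "psd_mat \<rho>'"
    unfolding psd_mat_def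
  proof
    fix x :: "complex ^ 'a"
    define e :: "complex ^ 'a" where "e = axis k 1"
    define w0 where "w0 = sesq e \<rho> x"
    define t where "t = - w0 / \<rho> $ k $ k"
    have xe: "sesq x \<rho> e = cnj w0" unfolding w0_def by (rule sesq_swap_hermitian[OF h])
    have "sandwich x \<rho>' = sesq x \<rho> x -
        (\<Sum>a\<in>UNIV. \<Sum>b\<in>UNIV. cnj (x $ a) * \<rho> $ a $ k * (\<rho> $ k $ b * x $ b)) / \<rho> $ k $ k"
      unfolding sandwich_def sesq_def \<rho>'_def
      by (simp add: ring_distribs sum_subtractf sum_divide_distrib mult_ac)
    also have "(\<Sum>a\<in>UNIV. \<Sum>b\<in>UNIV. cnj (x $ a) * \<rho> $ a $ k * (\<rho> $ k $ b * x $ b)) = sesq x \<rho> e * w0"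
      unfolding w0_def e_def sesq_axis_right sesq_axis_left sum_product ..
    also have "sesq x \<rho> x - sesq x \<rho> e * w0 / \<rho> $ k $ k
        = sesq x \<rho> x + t * cnj w0 + cnj t * w0 + cnj t * t * \<rho> $ k $ k"
      unfolding xe t_def using kk rk by (simp add: field_simps)
    also have "\<dots> = sandwich (x + t *s e) \<rho>"
      using sesq_axis[of k \<rho> k] unfolding sandwich_eq_sesq
      by (simp add: sesq_add_left sesq_add_right sesq_scale_left sesq_scale_right xe
          w0_def[symmetric] e_def[symmetric] algebra_simps)
    finally show "0 \<le> Re (sandwich x \<rho>')" using p unfolding psd_mat_def by simp
  qed
  define w where "w = (\<chi> i. \<rho> $ i $ k / of_real (sqrt r))"
  have "\<rho> $ i $ j = \<rho>' $ i $ j + w $ i * cnj (w $ j)" for i j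
  proof -
    have "(complex_of_real (sqrt r))\<^sup>2 = complex_of_real r"
      using r by (metis of_real_power real_sqrt_pow2 less_imp_le)
    then have "w $ i * cnj (w $ j) = \<rho> $ i $ k * \<rho> $ k $ j / of_real r"
      using r by (simp add: w_def hermitian_mat_cnj[OF h] power2_eq_square[symmetric])
    then show ?thesis by (simp add: \<rho>'_def rk)
  qed
  then show "\<exists>w. \<forall>i j. \<rho> $ i $ j = \<rho>' $ i $ j + w $ i * cnj (w $ j)" by blast
qed

lemma trace_prod_add_rank_one:
  assumes "\<And>i j. \<rho> $ i $ j = \<rho>' $ i $ j + w $ i * cnj (w $ j)"
  shows "trace_prod \<rho> B = trace_prod \<rho>' B + sandwich w B"
proof -
  have "trace_prod \<rho> B = trace_prod \<rho>' B + (\<Sum>a\<in>UNIV. \<Sum>b\<in>UNIV. w $ a * cnj (w $ b) * B $ b $ a)"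
    unfolding trace_prod_def assms by (simp add: ring_distribs sum.distrib)
  also have "(\<Sum>a\<in>UNIV. \<Sum>b\<in>UNIV. w $ a * cnj (w $ b) * B $ b $ a) = sandwich w B"
    unfolding sandwich_def by (subst sum.swap) (simp add: mult_ac)
  finally show ?thesis .
qed

text \<open>Induction on the number of nonzero rows of \<open>\<rho>\<close>, peeling off one rank-one summand
  \<open>w w\<^sup>*\<close> at a time; each contributes \<open>\<langle>w|B|w\<rangle> \<ge> 0\<close>.\<close>
lemma trace_prod_psd_nonneg:
  fixes \<rho> B :: "complex ^ 'n ^ 'n"
  assumes "hermitian_mat \<rho>" "psd_mat \<rho>" "psd_mat B"
  shows "0 \<le> Re (trace_prod \<rho> B)"
  using assms
proof (induction "card {k. \<exists>l. \<rho> $ k $ l \<noteq> 0}" arbitrary: \<rho> rule: less_induct)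
  case less
  show ?case
  proof (cases "\<forall>k l. \<rho> $ k $ l = 0")
    case True
    then show ?thesis by (simp add: trace_prod_def)
  next
    case False
    then obtain k l where "\<rho> $ k $ l \<noteq> 0" by blast
    then have kk: "\<rho> $ k $ k \<noteq> 0" using hermitian_psd_row_zero[OF less.prems(1,2)] by blast
    define \<rho>' where "\<rho>' = (\<chi> i j. \<rho> $ i $ j - \<rho> $ i $ k * \<rho> $ k $ j / \<rho> $ k $ k)"
    note schur = hermitian_psd_schur_complement[OF less.prems(1,2) kk, folded \<rho>'_def]
    obtain w where w: "\<And>i j. \<rho> $ i $ j = \<rho>' $ i $ j + w $ i * cnj (w $ j)" using schur(3) by blast
    have "{i. \<exists>l. \<rho>' $ i $ l \<noteq> 0} \<subseteq> {i. \<exists>l. \<rho> $ i $ l \<noteq> 0}"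
      unfolding \<rho>'_def by (auto, metis div_0 mult_zero_left)
    moreover have "\<rho>' $ k $ j = 0" for j unfolding \<rho>'_def using kk by simp
    ultimately have "{i. \<exists>l. \<rho>' $ i $ l \<noteq> 0} \<subset> {i. \<exists>l. \<rho> $ i $ l \<noteq> 0}"
      using \<open>\<rho> $ k $ l \<noteq> 0\<close> by blast
    then have "card {i. \<exists>l. \<rho>' $ i $ l \<noteq> 0} < card {i. \<exists>l. \<rho> $ i $ l \<noteq> 0}"
      by (rule psubset_card_mono[OF finite])
    then have "0 \<le> Re (trace_prod \<rho>' B)" using less.hyps schur(1,2) less.prems(3) by blast
    moreover have "0 \<le> Re (sandwich w B)" using less.prems(3) unfolding psd_mat_def by blast
    ultimately show ?thesis using trace_prod_add_rank_one[OF w] by simp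
  qed
qed

definition outer_sum :: "('i \<Rightarrow> complex ^ 'n) \<Rightarrow> 'i set \<Rightarrow> complex ^ 'n ^ 'n" where
  "outer_sum v S = (\<chi> k l. \<Sum>i\<in>S. v i $ k * cnj (v i $ l))"

lemma sandwich_outer_sum:
  "finite S \<Longrightarrow> sandwich x (outer_sum v S) = of_real (\<Sum>i\<in>S. (cmod (braket (v i) x))\<^sup>2)"
proof -
  assume S: "finite S"
  have "sandwich x (outer_sum v S)
      = (\<Sum>k\<in>UNIV. \<Sum>l\<in>UNIV. \<Sum>i\<in>S. cnj (x $ k) * v i $ k * (cnj (v i $ l) * x $ l))"
    unfolding sandwich_def outer_sum_def by (simp add: sum_distrib_left sum_distrib_right mult_ac)
  also have "\<dots> = (\<Sum>i\<in>S. \<Sum>k\<in>UNIV. \<Sum>l\<in>UNIV. cnj (x $ k) * v i $ k * (cnj (v i $ l) * x $ l))"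
    by (subst sum.swap) (simp add: sum.swap[of _ S])
  also have "\<dots> = (\<Sum>i\<in>S. cnj (braket (v i) x) * braket (v i) x)"
    unfolding braket_def cnj_sum sum_product by (simp add: mult_ac)
  finally show ?thesis unfolding of_real_sum by (simp add: cnj_mult_eq_cmod_sq)
qed

lemma trace_prod_outer_sum:
  "finite S \<Longrightarrow> trace_prod \<rho> (outer_sum v S) = (\<Sum>i\<in>S. sandwich (v i) \<rho>)"
proof -
  assume S: "finite S"
  have "trace_prod \<rho> (outer_sum v S)
      = (\<Sum>k\<in>UNIV. \<Sum>l\<in>UNIV. \<Sum>i\<in>S. cnj (v i $ k) * \<rho> $ k $ l * v i $ l)"
    unfolding trace_prod_def outer_sum_def by (simp add: sum_distrib_left mult_ac)
  also have "\<dots> = (\<Sum>i\<in>S. \<Sum>k\<in>UNIV. \<Sum>l\<in>UNIV. cnj (v i $ k) * \<rho> $ k $ l * v i $ l)"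
    by (subst sum.swap) (simp add: sum.swap[of _ S])
  finally show ?thesis unfolding sandwich_def .
qed

text \<open>Completeness of an orthonormal basis, read off from \<open>A\<^sup>* A = 1 \<Longrightarrow> A A\<^sup>* = 1\<close>.\<close>
lemma outer_sum_orthonormal_basis:
  fixes a :: "'n::finite \<Rightarrow> complex ^ 'n"
  assumes "orthonormal_basis_fam a"
  shows "outer_sum a UNIV = mat 1"
proof -
  define A :: "complex ^ 'n ^ 'n" where "A = (\<chi> k i. a i $ k)"
  define A' :: "complex ^ 'n ^ 'n" where "A' = (\<chi> i k. cnj (a i $ k))"
  have "A' ** A = mat 1"
    using assms unfolding orthonormal_basis_fam_def braket_def
    by (simp add: vec_eq_iff matrix_matrix_mult_def mat_def A_def A'_def)
  then have "A ** A' = mat 1" by (simp add: matrix_left_right_inverse)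
  then show ?thesis by (simp add: vec_eq_iff matrix_matrix_mult_def outer_sum_def A_def A'_def)
qed

lemma density_matrix_hermitian: "density_matrix \<rho> \<Longrightarrow> hermitian_mat \<rho>"
  and density_matrix_psd: "density_matrix \<rho> \<Longrightarrow> psd_mat \<rho>"
  and density_matrix_trace: "density_matrix \<rho> \<Longrightarrow> (\<Sum>k\<in>UNIV. \<rho> $ k $ k) = 1"
  unfolding density_matrix_def hermitian_mat_def psd_mat_def by blast+

lemma sandwich_diff: "sandwich x (M - N) = sandwich x M - sandwich x N"
  unfolding sandwich_def by (simp add: ring_distribs sum_subtractf)

lemma trace_prod_diff: "trace_prod \<rho> (M - N) = trace_prod \<rho> M - trace_prod \<rho> N"
  unfolding trace_prod_def by (simp add: ring_distribs sum_subtractf)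

lemma sandwich_mat: "sandwich x (mat c) = c * braket x x"
  unfolding sandwich_def braket_def mat_def
  by (simp add: if_distrib[of "\<lambda>z. _ * z"] if_distrib[of "\<lambda>z. z * _"] sum_distrib_left mult_ac
      cong: if_cong)

lemma trace_prod_mat: "trace_prod \<rho> (mat c) = c * (\<Sum>k\<in>UNIV. \<rho> $ k $ k)"
  unfolding trace_prod_def mat_def
  by (simp add: if_distrib[of "\<lambda>z. _ * z"] sum_distrib_left mult_ac cong: if_cong)

lemma sum_sandwich_orthonormal_basis:
  assumes "orthonormal_basis_fam a" "density_matrix \<rho>"
  shows "(\<Sum>i\<in>UNIV. Re (sandwich (a i) \<rho>)) = 1"
  using trace_prod_outer_sum[of UNIV \<rho> a] density_matrix_trace[OF assms(2)]
  unfolding outer_sum_orthonormal_basis[OF assms(1)] trace_prod_mat by (simp flip: Re_sum)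

text \<open>The operator \<open>(1 + c) I - P\<^sub>R - Q\<^sub>C\<close>, with \<open>P\<^sub>R, Q\<^sub>C\<close> the projections onto
  \<open>{a\<^sub>i | i \<in> R}\<close> and \<open>{b\<^sub>j | j \<in> C}\<close>, is positive semidefinite by the pure-state
  bound; pairing it with \<open>\<rho>\<close> gives the mixed-state bound.\<close>
lemma density_overlap_sum_le_submat_norm:
  fixes a b :: "'n::finite \<Rightarrow> complex ^ 'n" and U \<rho> :: "complex ^ 'n ^ 'n"
  assumes oa: "orthonormal_basis_fam a" and ob: "orthonormal_basis_fam b"
    and U: "\<And>i j. U $ i $ j = braket (a i) (b j)" and \<rho>: "density_matrix \<rho>"
  shows "(\<Sum>i\<in>R. Re (sandwich (a i) \<rho>)) + (\<Sum>j\<in>C. Re (sandwich (b j) \<rho>))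
          \<le> 1 + submat_norm U R C"
proof -
  define c where "c = submat_norm U R C"
  define B :: "complex ^ 'n ^ 'n" where
    "B = mat (of_real (1 + c)) - outer_sum a R - outer_sum b C"
  have "psd_mat B" unfolding psd_mat_def
  proof
    fix x :: "complex ^ 'n"
    have "Re (sandwich x B) = (1 + c) * (norm x)\<^sup>2 - (\<Sum>i\<in>R. (cmod (braket (a i) x))\<^sup>2)
           - (\<Sum>j\<in>C. (cmod (braket (b j) x))\<^sup>2)"
      unfolding B_def sandwich_diff sandwich_mat sandwich_outer_sum[OF finite] braket_self by simp
    then show "0 \<le> Re (sandwich x B)"
      using overlap_sum_le_submat_norm[OF oa ob U, where R=R and C=C and x=x] unfolding c_def by simp
  qed
  then have "0 \<le> Re (trace_prod \<rho> B)"
    using trace_prod_psd_nonneg density_matrix_hermitian[OF \<rho>] density_matrix_psd[OF \<rho>] by blast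
  moreover have "Re (trace_prod \<rho> B)
      = (1 + c) - (\<Sum>i\<in>R. Re (sandwich (a i) \<rho>)) - (\<Sum>j\<in>C. Re (sandwich (b j) \<rho>))"
    unfolding B_def trace_prod_diff trace_prod_mat trace_prod_outer_sum[OF finite]
      density_matrix_trace[OF \<rho>] by (simp add: Re_sum)
  ultimately show ?thesis unfolding c_def by simp
qed

section \<open>Submatrix norms of a unitary matrix\<close>

lemma norm_unitary_mult:
  fixes U :: "complex ^ 'n ^ 'n"
  assumes "unitary_mat U" shows "norm (U *v z) = norm z"
proof -
  have col: "(\<Sum>i\<in>UNIV. cnj (U $ i $ j) * U $ i $ j') = (if j = j' then 1 else 0)" for j j'
    using assms unfolding unitary_mat_def by blast
  have "braket (U *v z) (U *v z)
      = (\<Sum>i\<in>UNIV. \<Sum>j\<in>UNIV. \<Sum>j'\<in>UNIV. cnj (U $ i $ j) * cnj (z $ j) * (U $ i $ j' * z $ j'))"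
    unfolding braket_def matrix_vector_mult_def cnj_sum complex_cnj_mult by (simp add: sum_product)
  also have "\<dots> = (\<Sum>j\<in>UNIV. \<Sum>j'\<in>UNIV. \<Sum>i\<in>UNIV. cnj (U $ i $ j) * cnj (z $ j) * (U $ i $ j' * z $ j'))"
    by (subst sum.swap) (rule sum.cong[OF refl], rule sum.swap)
  also have "\<dots> = (\<Sum>j\<in>UNIV. \<Sum>j'\<in>UNIV. cnj (z $ j) * z $ j' * (\<Sum>i\<in>UNIV. cnj (U $ i $ j) * U $ i $ j'))"
    by (simp add: sum_distrib_left mult_ac)
  also have "\<dots> = braket z z"
    unfolding col braket_def by (simp add: mult_if_one_zero)
  finally have "(norm (U *v z))\<^sup>2 = (norm z)\<^sup>2"
    unfolding braket_self by (simp only: of_real_eq_iff)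
  then show ?thesis by (simp add: power2_eq_iff_nonneg)
qed

lemma submat_norm_le_1:
  fixes U :: "complex ^ 'n ^ 'n" assumes "unitary_mat U"
  shows "submat_norm U R C \<le> 1"
  unfolding submat_norm_eq_onorm
proof (rule onorm_le)
  fix x :: "complex ^ 'n"
  let ?x = "\<chi> j. if j \<in> C then x $ j else 0"
  have "norm (submat_op U R C x) \<le> norm (U *v ?x)"
    by (rule norm_vec_le_if_cmod_le)
       (simp add: submat_op_def matrix_vector_mult_def mult_if_one_zero if_distrib[of "\<lambda>z. _ * z"]
         sum.inter_restrict[symmetric] Int_commute cong: if_cong)
  also have "\<dots> \<le> norm x" unfolding norm_unitary_mult[OF assms] by (rule norm_restrict_vec_le)
  finally show "norm (submat_op U R C x) \<le> 1 * norm x" by simp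
qed

lemma submat_norm_column_ge_1:
  fixes U :: "complex ^ 'n ^ 'n" assumes "unitary_mat U"
  shows "1 \<le> submat_norm U UNIV {j}"
proof -
  have "submat_op U UNIV {j} (axis j 1) = U *v axis j 1"
    by (simp add: vec_eq_iff submat_op_def matrix_vector_mult_def axis_def mult_if_one_zero)
  then have "1 = norm (submat_op U UNIV {j} (axis j (1::complex)))"
    by (simp add: norm_unitary_mult[OF assms] norm_axis_1)
  also have "\<dots> \<le> submat_norm U UNIV {j} * norm (axis j (1::complex))"
    by (rule norm_submat_op_le)
  finally show ?thesis by (simp add: norm_axis_1)
qed

lemma submat_norm_mono_rows:
  fixes U :: "complex ^ 'n ^ 'n"
  assumes "R \<subseteq> R'" shows "submat_norm U R C \<le> submat_norm U R' C"
  unfolding submat_norm_eq_onorm[of U R C]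
proof (rule onorm_le)
  fix x :: "complex ^ 'n"
  have "norm (submat_op U R C x) \<le> norm (submat_op U R' C x)"
    by (rule norm_vec_le_if_cmod_le) (use assms in \<open>auto simp: submat_op_def\<close>)
  also have "\<dots> \<le> submat_norm U R' C * norm x" by (rule norm_submat_op_le)
  finally show "norm (submat_op U R C x) \<le> submat_norm U R' C * norm x" .
qed

lemma submat_norm_mono_cols:
  fixes U :: "complex ^ 'n ^ 'n"
  assumes "C \<subseteq> C'" shows "submat_norm U R C \<le> submat_norm U R C'"
  unfolding submat_norm_eq_onorm[of U R C]
proof (rule onorm_le)
  fix x :: "complex ^ 'n"
  let ?x = "\<chi> j. if j \<in> C then x $ j else 0"
  have "submat_op U R C x = submat_op U R C' ?x"
    using assms by (simp add: vec_eq_iff submat_op_def mult_if_one_zero if_distrib[of "\<lambda>z. _ * z"]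
        sum.inter_restrict[symmetric] Int_absorb1[OF assms] cong: if_cong)
  also have "norm \<dots> \<le> submat_norm U R C' * norm ?x" by (rule norm_submat_op_le)
  also have "\<dots> \<le> submat_norm U R C' * norm x"
    by (intro mult_left_mono norm_restrict_vec_le submat_norm_nonneg)
  finally show "norm (submat_op U R C x) \<le> submat_norm U R C' * norm x" .
qed

lemma finite_submat_norms: "finite {submat_norm U R C | R C. P R C}"
  by (rule finite_subset[of _ "(\<lambda>(R, C). submat_norm U R C) ` UNIV"]) auto

lemma submat_norm_le_s_val:
  assumes "R \<noteq> {}" "C \<noteq> {}" "card R + card C = k + 1"
  shows "submat_norm U R C \<le> s_val U k"
  unfolding s_val_def by (rule Max_ge[OF finite_submat_norms]) (use assms in blast)

lemma s_val_attained:
  fixes U :: "complex ^ 'n::finite ^ 'n"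
  assumes "1 \<le> k" "k \<le> CARD('n)"
  obtains R C where "R \<noteq> {}" "C \<noteq> {}" "card R + card C = k + 1" "s_val U k = submat_norm U R C"
proof -
  obtain C :: "'n set" where C: "card C = k"
    using obtain_subset_with_card_n[of k "UNIV :: 'n set"] assms by auto
  then have "C \<noteq> {}" using assms by auto
  then have "submat_norm U {undefined} C
      \<in> {submat_norm U R C | R C. R \<noteq> {} \<and> C \<noteq> {} \<and> card R + card C = k + 1}"
    using C by fastforce
  then have "{submat_norm U R C | R C. R \<noteq> {} \<and> C \<noteq> {} \<and> card R + card C = k + 1} \<noteq> {}"
    by blast
  then have "s_val U k \<in> {submat_norm U R C | R C. R \<noteq> {} \<and> C \<noteq> {} \<and> card R + card C = k + 1}"
    unfolding s_val_def by (rule Max_in[OF finite_submat_norms])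
  then show ?thesis using that by blast
qed

lemma s_val_nonneg:
  fixes U :: "complex ^ 'n::finite ^ 'n"
  assumes "1 \<le> k" "k \<le> CARD('n)"
  shows "0 \<le> s_val U k"
  using s_val_attained[OF assms] submat_norm_nonneg by metis

text \<open>Growing a maximizing submatrix by one row, or by one column once all rows are used,
  yields a candidate for \<open>s_val U (k + 1)\<close>.\<close>
lemma s_val_le_Suc:
  fixes U :: "complex ^ 'n::finite ^ 'n"
  assumes k: "1 \<le> k" "k + 1 \<le> CARD('n)"
  shows "s_val U k \<le> s_val U (k + 1)"
proof -
  obtain R C where RC: "R \<noteq> {}" "C \<noteq> {}" "card R + card C = k + 1" "s_val U k = submat_norm U R C"
    using s_val_attained[of k U] k by auto
  show ?thesis
  proof (cases "R = UNIV")
    case False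
    then obtain r where r: "r \<notin> R" by auto
    have "submat_norm U R C \<le> submat_norm U (insert r R) C" by (rule submat_norm_mono_rows) auto
    also have "\<dots> \<le> s_val U (k + 1)" using RC r by (intro submat_norm_le_s_val) auto
    finally show ?thesis using RC by simp
  next
    case True
    then have "C \<noteq> UNIV" using RC k by auto
    then obtain c where c: "c \<notin> C" by auto
    have "submat_norm U R C \<le> submat_norm U R (insert c C)" by (rule submat_norm_mono_cols) auto
    also have "\<dots> \<le> s_val U (k + 1)" using RC c by (intro submat_norm_le_s_val) auto
    finally show ?thesis using RC by simp
  qed
qed

lemma s_val_card:
  fixes U :: "complex ^ 'n::finite ^ 'n"
  assumes "unitary_mat U"
  shows "s_val U CARD('n) = 1"
proof (rule antisym)
  have "1 \<le> CARD('n)" by (simp add: Suc_leI)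
  then show "s_val U CARD('n) \<le> 1"
    using s_val_attained[of "CARD('n)" U] submat_norm_le_1[OF assms] by (metis order_refl)
  have "submat_norm U UNIV {undefined} \<le> s_val U CARD('n)"
    by (rule submat_norm_le_s_val) auto
  then show "1 \<le> s_val U CARD('n)" using submat_norm_column_ge_1[OF assms, of undefined] by simp
qed

lemma W_vec_nonneg:
  fixes U :: "complex ^ 'n::finite ^ 'n"
  assumes "1 \<le> k" "k \<le> CARD('n)"
  shows "0 \<le> W_vec U k"
proof (cases "k = 1")
  case True then show ?thesis using s_val_nonneg[OF assms] by (simp add: W_vec_def)
next
  case False
  then have "s_val U (k - 1) \<le> s_val U (k - 1 + 1)" using assms by (intro s_val_le_Suc) auto
  then show ?thesis using False assms by (simp add: W_vec_def)
qed

lemma sum_W_vec: "1 \<le> j \<Longrightarrow> (\<Sum>k=1..j. W_vec U k) = s_val U j"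
proof (induction j rule: nat_induct_at_least)
  case (Suc j)
  then show ?case by (simp add: W_vec_def)
qed (simp add: W_vec_def)

section \<open>Majorization and the entropic bound\<close>

lemma tsallis_eq_sum_tsallis_term:
  assumes "(\<Sum>i\<in>I. x i) = 1"
  shows "tsallis a I x = (\<Sum>i\<in>I. tsallis_term a (x i))"
proof (cases "a = 1")
  case True
  have "(\<Sum>i\<in>I. tsallis_term a (x i)) = (\<Sum>i\<in>I. - (if x i = 0 then 0 else x i * ln (x i)))"
    using True by (intro sum.cong) (auto simp: tsallis_term_def)
  then show ?thesis by (simp add: tsallis_def True sum_negf)
next
  case False
  then show ?thesis
    using assms by (simp add: tsallis_def tsallis_term_def sum_subtractf sum_divide_distrib[symmetric])
qed

lemma sum_W_vec_card:
  fixes U :: "complex ^ 'n::finite ^ 'n"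
  assumes "unitary_mat U" shows "(\<Sum>k=1..CARD('n). W_vec U k) = 1"
  using sum_W_vec[of "CARD('n)" U] s_val_card[OF assms] by (simp add: Suc_leI)

definition W_majorant :: "complex ^ 'n::finite ^ 'n \<Rightarrow> nat \<Rightarrow> real" where
  "W_majorant U k = (if k = 0 then 1 else if k \<le> CARD('n) then W_vec U k else 0)"

lemma W_majorant_nonneg: "0 \<le> W_majorant U k"
  unfolding W_majorant_def using W_vec_nonneg[of k U] by simp

lemma sum_W_majorant:
  fixes U :: "complex ^ 'n::finite ^ 'n"
  shows "(\<Sum>i<Suc k. W_majorant U i) = 1 + (\<Sum>m=1..min k CARD('n). W_vec U m)"
proof (induction k)
  case (Suc k)
  show ?case
  proof (cases "Suc k \<le> CARD('n)")
    case True
    then show ?thesis using Suc.IH by (simp add: W_majorant_def sum.cl_ivl_Suc)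
  next
    case False
    then have "min (Suc k) CARD('n) = min k CARD('n)" by simp
    then show ?thesis using Suc.IH False by (simp add: W_majorant_def)
  qed
qed (simp add: W_majorant_def)

text \<open>A set of \<open>k + 1\<close> outcomes meeting both bases carries weight at most \<open>1 + s\<^sub>k\<close>;
  one meeting only one basis, at most \<open>1\<close>.\<close>
lemma sum_Plus_le_sum_W_majorant:
  fixes p q :: "'n::finite \<Rightarrow> real" and U :: "complex ^ 'n ^ 'n"
  assumes U: "unitary_mat U"
    and p: "\<And>i. 0 \<le> p i" "(\<Sum>i\<in>UNIV. p i) = 1" and q: "\<And>j. 0 \<le> q j" "(\<Sum>j\<in>UNIV. q j) = 1"
    and bound: "\<And>R C. R \<noteq> {} \<Longrightarrow> C \<noteq> {} \<Longrightarrow> sum p R + sum q C \<le> 1 + submat_norm U R C"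
  shows "(\<Sum>i\<in>S. case_sum p q i) \<le> (\<Sum>k<card S. W_majorant U k)"
proof (cases "card S")
  case 0 then show ?thesis by simp
next
  case (Suc k)
  define R where "R = Inl -` S"
  define C where "C = Inr -` S"
  have S: "S = R <+> C"
  proof (rule set_eqI)
    show "z \<in> S \<longleftrightarrow> z \<in> R <+> C" for z by (cases z) (auto simp: R_def C_def)
  qed
  have card: "card R + card C = k + 1" using Suc unfolding S by (simp add: card_Plus)
  have "(\<Sum>i\<in>S. case_sum p q i) = sum p R + sum q C" unfolding S by (simp add: sum.Plus)
  also have "\<dots> \<le> 1 + (\<Sum>m=1..min k CARD('n). W_vec U m)"
  proof (cases "R = {} \<or> C = {}")
    case True
    have "sum p R \<le> 1" "sum q C \<le> 1"
      using p q by (metis sum_mono2 finite subset_UNIV)+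
    moreover have "0 \<le> (\<Sum>m=1..min k CARD('n). W_vec U m)" by (auto intro!: sum_nonneg W_vec_nonneg)
    ultimately show ?thesis using True by auto
  next
    case False
    then have "card R \<noteq> 0" "card C \<noteq> 0" by auto
    then have k: "1 \<le> k" using card by linarith
    have "submat_norm U R C \<le> s_val U (min k CARD('n))"
    proof (cases "k \<le> CARD('n)")
      case True
      then show ?thesis using False card by (auto intro: submat_norm_le_s_val)
    next
      case False
      then show ?thesis using submat_norm_le_1[OF U] s_val_card[OF U] by simp
    qed
    also have "\<dots> = (\<Sum>m=1..min k CARD('n). W_vec U m)"
      using k by (intro sum_W_vec[symmetric]) (simp add: Suc_leI)
    finally have "submat_norm U R C \<le> (\<Sum>m=1..min k CARD('n). W_vec U m)" .
    moreover have "sum p R + sum q C \<le> 1 + submat_norm U R C" using False by (intro bound) auto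
    ultimately show ?thesis by linarith
  qed
  also have "\<dots> = (\<Sum>k<card S. W_majorant U k)" unfolding Suc sum_W_majorant ..
  finally show ?thesis .
qed

lemma sum_tsallis_term_W_majorant:
  fixes U :: "complex ^ 'n::finite ^ 'n"
  assumes "unitary_mat U" "CARD('n) \<le> k"
  shows "(\<Sum>i<Suc k. tsallis_term a (W_majorant U i)) = tsallis a {1..CARD('n)} (W_vec U)"
proof -
  have "(\<Sum>i<Suc k. tsallis_term a (W_majorant U i))
      = (\<Sum>i<Suc k. if i \<in> {1..CARD('n)} then tsallis_term a (W_vec U i) else 0)"
    by (intro sum.cong) (auto simp: W_majorant_def)
  also have "\<dots> = (\<Sum>i\<in>{..<Suc k} \<inter> {1..CARD('n)}. tsallis_term a (W_vec U i))"
    by (rule sum.inter_restrict[OF finite_lessThan, symmetric])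
  also have "\<dots> = (\<Sum>i\<in>{1..CARD('n)}. tsallis_term a (W_vec U i))"
    using assms(2) by (intro sum.cong) auto
  also have "\<dots> = tsallis a {1..CARD('n)} (W_vec U)"
    by (rule tsallis_eq_sum_tsallis_term[symmetric, OF sum_W_vec_card[OF assms(1)]])
  finally show ?thesis .
qed

theorem theorem3:
  fixes a b :: "'n::finite \<Rightarrow> complex ^ 'n"
    and \<rho> :: "complex ^ 'n ^ 'n"
    and U :: "complex ^ 'n ^ 'n"
    and \<alpha> :: real
  assumes "orthonormal_basis_fam a" and "orthonormal_basis_fam b"
    and "\<And>i j. U $ i $ j = braket (a i) (b j)"
    and "unitary_mat U"
    and "density_matrix \<rho>"
    and "\<alpha> \<ge> 0"
  shows "tsallis \<alpha> UNIV (\<lambda>i. Re (sandwich (a i) \<rho>)) + tsallis \<alpha> UNIV (\<lambda>j. Re (sandwich (b j) \<rho>))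
         \<ge> tsallis \<alpha> {1..CARD('n)} (W_vec U)"
proof -
  define p where "p i = Re (sandwich (a i) \<rho>)" for i
  define q where "q j = Re (sandwich (b j) \<rho>)" for j
  have p: "\<And>i. 0 \<le> p i" "(\<Sum>i\<in>UNIV. p i) = 1" and q: "\<And>j. 0 \<le> q j" "(\<Sum>j\<in>UNIV. q j) = 1"
    using assms density_matrix_psd[OF assms(5)]
    by (auto simp: p_def q_def psd_mat_def sum_sandwich_orthonormal_basis)
  have sum_Plus: "(\<Sum>i\<in>UNIV. h i) = (\<Sum>i\<in>UNIV. h (Inl i)) + (\<Sum>j\<in>UNIV. h (Inr j))"
    for h :: "'n + 'n \<Rightarrow> real"
    by (simp add: sum.Plus flip: UNIV_Plus_UNIV)
  have card: "card (UNIV :: ('n + 'n) set) = Suc (2 * CARD('n) - 1)"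
    by (simp add: card_UNIV_sum)
  have majorized: "(\<Sum>k<card (UNIV :: ('n + 'n) set). tsallis_term \<alpha> (W_majorant U k))
      \<le> (\<Sum>i\<in>UNIV. tsallis_term \<alpha> (case_sum p q i))"
  proof (rule sum_concave_le_of_subset_majorized[OF tsallis_term_le_tangent tsallis_slope_antimono])
    show "(\<Sum>i\<in>S. case_sum p q i) \<le> (\<Sum>k<card S. W_majorant U k)" for S
      using assms(1-3,5) by (intro sum_Plus_le_sum_W_majorant[OF assms(4) p q]
          density_overlap_sum_le_submat_norm[of a b U \<rho>, folded p_def q_def])
    show "(\<Sum>i\<in>UNIV. case_sum p q i) = (\<Sum>k<card (UNIV :: ('n + 'n) set). W_majorant U k)"
      unfolding sum_Plus card sum_W_majorant using p q sum_W_vec_card[OF assms(4)] by simp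
  qed (use assms(6) p q W_majorant_nonneg in \<open>auto split: sum.split\<close>)
  show ?thesis
    using majorized[unfolded card sum_Plus] p q
      sum_tsallis_term_W_majorant[OF assms(4), of "2 * CARD('n) - 1" \<alpha>]
    by (simp add: tsallis_eq_sum_tsallis_term p_def q_def)
qed

end
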